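(* Let $\mathcal{C}$ be a $\beta$-avoiding simplicial complex. Then its Alexander dual $\mathcal{C}^*$ is also $\beta$-avoiding.
   Context: A simplicial complex on a finite ground set $V$ is a family of subsets of $V$ closed under subsets; isomorphism means a bijection of ground sets carrying faces onto faces. The Alexander dual is $\mathcal{C}^*=\{S\subseteq V: V\setminus S\notin\mathcal{C}\}$. For $S\subseteq V$, $\mathcal{C}\setminus S$ is the induced subcomplex $\{F\in\mathcal{C}:F\cap S=\emptyset\}$ on $V\setminus S$; for a face $R$, $\operatorname{link}_R(\mathcal{C})=\{F\setminus R: R\subseteq F\in\mathcal{C}\}$ on $V\setminus R$. A minor of $\mathcal{C}$ is $\operatorname{link}_R(\mathcal{C}\setminus S)$ with $S\cap R=\emptyset$ and $R$ a face of $\mathcal{C}$. $\mathcal{C}$ is $\beta$-avoiding if no minor is isomorphic to any of: $P_4$ (on $\{1,2,3,4\}$, facets $12,23,34$); $O_6$ (on $\{1,\dots,6\}$, faces the subsets containing none of $\{1,2\},\{3,4\},\{5,6\}$) or $O_6^*$; $J_1$ (on $\{1,\dots,5\}$, facets $12,15,234,345$) or $J_1^*$ (facets $134,235,245$); $J_2$ (on $\{1,\dots,5\}$, facets $12,235,34,145$); $\partial\Delta_n\sqcup\{v\}$ for $n\ge1$ (all proper subsets of an $(n+1)$-set, together with one extra isolated vertex $v$). *)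

theory Defs
  imports Main
begin

definition simplicial_complex :: "'a set \<Rightarrow> 'a set set \<Rightarrow> bool" where
  "simplicial_complex V C \<longleftrightarrow> finite V \<and> (\<forall>F\<in>C. F \<subseteq> V) \<and>
     (\<forall>F\<in>C. \<forall>G. G \<subseteq> F \<longrightarrow> G \<in> C)"

definition cx_iso :: "'a set \<Rightarrow> 'a set set \<Rightarrow> 'b set \<Rightarrow> 'b set set \<Rightarrow> bool" where
  "cx_iso V C W D \<longleftrightarrow> (\<exists>f. bij_betw f V W \<and> (\<forall>F. F \<subseteq> V \<longrightarrow> (F \<in> C \<longleftrightarrow> f ` F \<in> D)))"

definition alex_dual :: "'a set \<Rightarrow> 'a set set \<Rightarrow> 'a set set" where
  "alex_dual V C = {S. S \<subseteq> V \<and> V - S \<notin> C}"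

text \<open>Induced subcomplex C \ S (on ground set V - S) and link (on ground set V - R).\<close>
definition del_faces :: "'a set set \<Rightarrow> 'a set \<Rightarrow> 'a set set" where
  "del_faces C S = {F \<in> C. F \<inter> S = {}}"

definition link_faces :: "'a set set \<Rightarrow> 'a set \<Rightarrow> 'a set set" where
  "link_faces C R = {F - R | F. F \<in> C \<and> R \<subseteq> F}"

text \<open>Faces of the minor link_R(C \ S); its ground set is V - S - R.\<close>
definition minor_faces :: "'a set set \<Rightarrow> 'a set \<Rightarrow> 'a set \<Rightarrow> 'a set set" where
  "minor_faces C S R = link_faces (del_faces C S) R"

definition gen_cx :: "nat set \<Rightarrow> nat set set \<Rightarrow> nat set set" where
  "gen_cx V Fs = {F. F \<subseteq> V \<and> (\<exists>G\<in>Fs. F \<subseteq> G)}"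

definition P4 :: "nat set set" where
  "P4 = gen_cx {1..4} {{1,2},{2,3},{3,4}}"

definition O6 :: "nat set set" where
  "O6 = {F. F \<subseteq> {1..6} \<and> \<not> {1,2} \<subseteq> F \<and> \<not> {3,4} \<subseteq> F \<and> \<not> {5,6} \<subseteq> F}"

definition O6_dual :: "nat set set" where
  "O6_dual = alex_dual {1..6} O6"

definition J1 :: "nat set set" where
  "J1 = gen_cx {1..5} {{1,2},{1,5},{2,3,4},{3,4,5}}"

definition J1_dual :: "nat set set" where
  "J1_dual = gen_cx {1..5} {{1,3,4},{2,3,5},{2,4,5}}"

definition J2 :: "nat set set" where
  "J2 = gen_cx {1..5} {{1,2},{2,3,5},{3,4},{1,4,5}}"

definition bdry_plus_pt :: "nat \<Rightarrow> nat set set" where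
  "bdry_plus_pt n = {F. F \<subset> {0..n}} \<union> {{n+1}}"

definition is_forbidden :: "'a set \<Rightarrow> 'a set set \<Rightarrow> bool" where
  "is_forbidden W D \<longleftrightarrow>
     cx_iso W D {1..4} P4 \<or> cx_iso W D {1..6} O6 \<or> cx_iso W D {1..6} O6_dual \<or>
     cx_iso W D {1..5} J1 \<or> cx_iso W D {1..5} J1_dual \<or> cx_iso W D {1..5} J2 \<or>
     (\<exists>n\<ge>1. cx_iso W D {0..n+1} (bdry_plus_pt n))"

definition beta_avoiding :: "'a set \<Rightarrow> 'a set set \<Rightarrow> bool" where
  "beta_avoiding V C \<longleftrightarrow>
     (\<forall>S R. S \<subseteq> V \<and> R \<in> C \<and> S \<inter> R = {} \<longrightarrow>
        \<not> is_forbidden (V - S - R) (minor_faces C S R))"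

end

theory Submission
  imports Defs
begin

text \<open>Let R be a face of the dual and S disjoint from R, and put W = V - S - R.
A set G \<subseteq> W is a face of the minor of the dual exactly when (W - G) \<union> S is not a face
of C. If S is not a face of C this holds for every G, so the minor is a full simplex,
which is never forbidden. If S is a face, the minor is the Alexander dual on W of the
minor link_S(C \ R) of C. The forbidden list is closed under duality up to
isomorphism, so a forbidden minor of the dual yields a forbidden minor of C.\<close>

lemma cx_iso_trans:
  assumes "cx_iso W D X E" and "cx_iso X E Y G"
  shows "cx_iso W D Y G"
proof -
  obtain f where f: "bij_betw f W X" "\<forall>F. F \<subseteq> W \<longrightarrow> (F \<in> D \<longleftrightarrow> f ` F \<in> E)"
    using assms(1) unfolding cx_iso_def by blast
  obtain g where g: "bij_betw g X Y" "\<forall>F. F \<subseteq> X \<longrightarrow> (F \<in> E \<longleftrightarrow> g ` F \<in> G)"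
    using assms(2) unfolding cx_iso_def by blast
  have "F \<in> D \<longleftrightarrow> (g \<circ> f) ` F \<in> G" if "F \<subseteq> W" for F
  proof -
    have "f ` F \<subseteq> X" using that f(1) bij_betw_imp_surj_on by blast
    then show ?thesis using f(2) g(2) that by (simp add: image_comp)
  qed
  then show ?thesis
    using bij_betw_trans[OF f(1) g(1)] unfolding cx_iso_def by blast
qed

lemma cx_iso_alex_dual:
  assumes "cx_iso W D X E"
  shows "cx_iso W (alex_dual W D) X (alex_dual X E)"
proof -
  obtain f where f: "bij_betw f W X" "\<forall>F. F \<subseteq> W \<longrightarrow> (F \<in> D \<longleftrightarrow> f ` F \<in> E)"
    using assms unfolding cx_iso_def by blast
  have "F \<in> alex_dual W D \<longleftrightarrow> f ` F \<in> alex_dual X E" if F: "F \<subseteq> W" for F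
  proof -
    have inj: "inj_on f W" and im: "f ` W = X" using f(1) by (auto simp: bij_betw_def)
    then have "f ` (W - F) = X - f ` F" using F by (metis Diff_subset inj_on_image_set_diff)
    moreover have "W - F \<in> D \<longleftrightarrow> f ` (W - F) \<in> E" using f(2) by blast
    ultimately show ?thesis using F im unfolding alex_dual_def by auto
  qed
  then show ?thesis using f(1) unfolding cx_iso_def by blast
qed

lemma alex_dual_alex_dual: "D \<subseteq> Pow W \<Longrightarrow> alex_dual W (alex_dual W D) = D"
  unfolding alex_dual_def by (auto simp: double_diff)

lemma cx_iso_alex_dualD:
  assumes "D \<subseteq> Pow W" and "cx_iso W (alex_dual W D) X E"
  shows "cx_iso W D X (alex_dual X E)"
  using cx_iso_alex_dual[OF assms(2)] alex_dual_alex_dual[OF assms(1)] by simp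

lemma cx_iso_gen_cx:
  assumes f: "bij_betw f X X" and Fs: "Fs \<subseteq> Pow X"
  shows "cx_iso X (gen_cx X Fs) X (gen_cx X ((`) f ` Fs))"
proof -
  have inj: "inj_on f X" and im: "f ` X = X" using f by (auto simp: bij_betw_def)
  have "F \<in> gen_cx X Fs \<longleftrightarrow> f ` F \<in> gen_cx X ((`) f ` Fs)" if F: "F \<subseteq> X" for F
  proof -
    have "f ` F \<subseteq> f ` G \<longleftrightarrow> F \<subseteq> G" if "G \<in> Fs" for G
    proof
      assume sub: "f ` F \<subseteq> f ` G"
      have "G \<subseteq> X" using that Fs by blast
      then show "F \<subseteq> G" using sub F inj_on_image_mem_iff[OF inj] by blast
    qed (rule image_mono)
    moreover have "f ` F \<subseteq> X" using F im by blast
    ultimately show ?thesis using F unfolding gen_cx_def by auto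
  qed
  then show ?thesis using f unfolding cx_iso_def by blast
qed

lemma cx_iso_Pow_imp_mem: "cx_iso W (Pow W) X E \<Longrightarrow> X \<in> E"
  unfolding cx_iso_def bij_betw_def by blast

lemma atLeastAtMost_1_4: "{1..4::nat} = {1,2,3,4}" by auto
lemma atLeastAtMost_1_5: "{1..5::nat} = {1,2,3,4,5}" by auto

lemma alex_dual_P4_iso: "cx_iso {1..4} (alex_dual {1..4} P4) {1..4} P4"
proof -
  let ?swap = "id(2 := 3, 3 := 2) :: nat \<Rightarrow> nat"
  have "\<forall>F\<in>Pow {1,2,3,4}. F \<in> alex_dual {1,2,3,4} P4 \<longleftrightarrow> F \<in> gen_cx {1,2,3,4} {{1,3},{2,3},{2,4}}"
    unfolding alex_dual_def P4_def gen_cx_def atLeastAtMost_1_4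
    by (simp add: Pow_insert insert_Diff_if)
  then have "alex_dual {1..4} P4 = gen_cx {1..4} {{1,3},{2,3},{2,4}}"
    unfolding atLeastAtMost_1_4 alex_dual_def gen_cx_def by blast
  moreover have "bij_betw ?swap {1..4} {1..4}"
    unfolding bij_betw_def inj_on_def atLeastAtMost_1_4 by auto
  moreover have "(`) ?swap ` {{1,3},{2,3},{2,4}} = {{1,2},{2,3},{3,4}}" by auto
  ultimately show ?thesis
    using cx_iso_gen_cx[of ?swap "{1..4}" "{{1,3},{2,3},{2,4}}"]
    unfolding P4_def by (auto simp: atLeastAtMost_1_4)
qed

lemma alex_dual_J2_iso: "cx_iso {1..5} (alex_dual {1..5} J2) {1..5} J2"
proof -
  let ?swap = "id(3 := 4, 4 := 3) :: nat \<Rightarrow> nat"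
  have "\<forall>F\<in>Pow {1,2,3,4,5}.
      F \<in> alex_dual {1,2,3,4,5} J2 \<longleftrightarrow> F \<in> gen_cx {1,2,3,4,5} {{1,2},{2,4,5},{3,4},{1,3,5}}"
    unfolding alex_dual_def J2_def gen_cx_def atLeastAtMost_1_5
    by (simp add: Pow_insert insert_Diff_if)
  then have "alex_dual {1..5} J2 = gen_cx {1..5} {{1,2},{2,4,5},{3,4},{1,3,5}}"
    unfolding atLeastAtMost_1_5 alex_dual_def gen_cx_def by blast
  moreover have "bij_betw ?swap {1..5} {1..5}"
    unfolding bij_betw_def inj_on_def atLeastAtMost_1_5 by auto
  moreover have "(`) ?swap ` {{1,2},{2,4,5},{3,4},{1,3,5}} = {{1,2},{2,3,5},{3,4},{1,4,5}}"
    by auto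
  ultimately show ?thesis
    using cx_iso_gen_cx[of ?swap "{1..5}" "{{1,2},{2,4,5},{3,4},{1,3,5}}"]
    unfolding J2_def by (auto simp: atLeastAtMost_1_5)
qed

lemma alex_dual_J1: "alex_dual {1..5} J1 = J1_dual"
proof -
  have "\<forall>F\<in>Pow {1,2,3,4,5}. F \<in> alex_dual {1,2,3,4,5} J1 \<longleftrightarrow> F \<in> J1_dual"
    unfolding alex_dual_def J1_def J1_dual_def gen_cx_def atLeastAtMost_1_5
    by (simp add: Pow_insert insert_Diff_if)
  then show ?thesis unfolding atLeastAtMost_1_5 alex_dual_def J1_dual_def gen_cx_def by blast
qed

lemma alex_dual_J1_dual: "alex_dual {1..5} J1_dual = J1"
  using alex_dual_alex_dual[of J1 "{1..5}"] unfolding alex_dual_J1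
  by (auto simp: J1_def gen_cx_def)

lemma alex_dual_O6_dual: "alex_dual {1..6} O6_dual = O6"
  unfolding O6_dual_def by (rule alex_dual_alex_dual) (auto simp: O6_def)

lemma alex_dual_boundary_plus_point:
  assumes "a \<notin> A"
  shows "alex_dual (insert a A) ({F. F \<subset> A} \<union> {{a}}) = {F. F \<subset> A} \<union> {{a}}"
proof (rule set_eqI)
  fix S
  have "S \<subseteq> insert a A \<and> \<not> insert a A - S \<subset> A \<and> insert a A - S \<noteq> {a} \<longleftrightarrow> S \<subset> A \<or> S = {a}"
    using assms by (cases "a \<in> S") auto
  then show "S \<in> alex_dual (insert a A) ({F. F \<subset> A} \<union> {{a}}) \<longleftrightarrow> S \<in> {F. F \<subset> A} \<union> {{a}}"
    unfolding alex_dual_def mem_Collect_eq Un_iff singleton_iff de_Morgan_disj .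
qed

lemma alex_dual_bdry_plus_pt: "alex_dual {0..n+1} (bdry_plus_pt n) = bdry_plus_pt n"
proof -
  have "{0..n+1} = insert (n+1) {0..n}" by auto
  then show ?thesis
    unfolding bdry_plus_pt_def using alex_dual_boundary_plus_point[of "n+1" "{0..n}"] by simp
qed

lemma is_forbidden_alex_dualD:
  assumes D: "D \<subseteq> Pow W" and "is_forbidden W (alex_dual W D)"
  shows "is_forbidden W D"
  using assms(2)[unfolded is_forbidden_def]
proof (elim disjE exE conjE)
  assume "cx_iso W (alex_dual W D) {1..4} P4"
  from cx_iso_trans[OF cx_iso_alex_dualD[OF D this] alex_dual_P4_iso] show ?thesis
    unfolding is_forbidden_def by blast
next
  assume "cx_iso W (alex_dual W D) {1..6} O6"
  from cx_iso_alex_dualD[OF D this] show ?thesis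
    unfolding is_forbidden_def O6_dual_def[symmetric] by blast
next
  assume "cx_iso W (alex_dual W D) {1..6} O6_dual"
  from cx_iso_alex_dualD[OF D this] show ?thesis
    unfolding is_forbidden_def alex_dual_O6_dual by blast
next
  assume "cx_iso W (alex_dual W D) {1..5} J1"
  from cx_iso_alex_dualD[OF D this] show ?thesis
    unfolding is_forbidden_def alex_dual_J1 by blast
next
  assume "cx_iso W (alex_dual W D) {1..5} J1_dual"
  from cx_iso_alex_dualD[OF D this] show ?thesis
    unfolding is_forbidden_def alex_dual_J1_dual by blast
next
  assume "cx_iso W (alex_dual W D) {1..5} J2"
  from cx_iso_trans[OF cx_iso_alex_dualD[OF D this] alex_dual_J2_iso] show ?thesis
    unfolding is_forbidden_def by blast
next
  fix n :: nat
  assume "1 \<le> n" and iso: "cx_iso W (alex_dual W D) {0..n+1} (bdry_plus_pt n)"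
  from cx_iso_alex_dualD[OF D iso] \<open>1 \<le> n\<close> show ?thesis
    unfolding is_forbidden_def alex_dual_bdry_plus_pt by blast
qed

lemma not_is_forbidden_Pow: "\<not> is_forbidden W (Pow W)"
proof
  assume "is_forbidden W (Pow W)"
  then have "{1..4} \<in> P4 \<or> {1..6} \<in> O6 \<or> {1..6} \<in> O6_dual \<or> {1..5} \<in> J1 \<or> {1..5} \<in> J1_dual
      \<or> {1..5} \<in> J2 \<or> (\<exists>n. {0..n+1} \<in> bdry_plus_pt n)"
    unfolding is_forbidden_def by (blast dest: cx_iso_Pow_imp_mem)
  moreover have "{1..4} \<notin> P4" "{1..5} \<notin> J1" "{1..5} \<notin> J1_dual" "{1..5} \<notin> J2"
    unfolding P4_def J1_def J1_dual_def J2_def gen_cx_def atLeastAtMost_1_4 atLeastAtMost_1_5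
    by auto
  moreover have "{1..6} \<notin> O6" "{1..6} \<notin> O6_dual"
    unfolding O6_dual_def alex_dual_def O6_def by auto
  moreover have "{0..n+1} \<notin> bdry_plus_pt n" for n
    unfolding bdry_plus_pt_def by auto
  ultimately show False by blast
qed

lemma mem_minor_faces_alex_dual:
  assumes "S \<subseteq> V" and "R \<subseteq> V" and "S \<inter> R = {}"
  shows "G \<in> minor_faces (alex_dual V C) S R \<longleftrightarrow> G \<subseteq> V - S - R \<and> (V - S - R - G) \<union> S \<notin> C"
proof
  assume "G \<in> minor_faces (alex_dual V C) S R"
  then obtain F where F: "G = F - R" "F \<subseteq> V" "V - F \<notin> C" "F \<inter> S = {}" "R \<subseteq> F"
    unfolding minor_faces_def link_faces_def del_faces_def alex_dual_def by blast
  moreover have "(V - S - R - G) \<union> S = V - F" using F assms(1) by blast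
  ultimately show "G \<subseteq> V - S - R \<and> (V - S - R - G) \<union> S \<notin> C" by auto
next
  assume G: "G \<subseteq> V - S - R \<and> (V - S - R - G) \<union> S \<notin> C"
  moreover have "V - (G \<union> R) = (V - S - R - G) \<union> S" using G assms by blast
  ultimately have "G \<union> R \<in> alex_dual V C"
    using assms(2) unfolding alex_dual_def by auto
  moreover have "(G \<union> R) \<inter> S = {}" "G = (G \<union> R) - R" using G assms(3) by blast+
  ultimately show "G \<in> minor_faces (alex_dual V C) S R"
    unfolding minor_faces_def link_faces_def del_faces_def by blast
qed

lemma mem_minor_faces:
  assumes "C \<subseteq> Pow V" and "S \<inter> R = {}"
  shows "H \<in> minor_faces C R S \<longleftrightarrow> H \<subseteq> V - S - R \<and> H \<union> S \<in> C"
proof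
  assume "H \<in> minor_faces C R S"
  then obtain F where "H = F - S" "F \<in> C" "F \<inter> R = {}" "S \<subseteq> F"
    unfolding minor_faces_def link_faces_def del_faces_def by blast
  moreover have "F \<subseteq> V" using \<open>F \<in> C\<close> assms(1) by blast
  ultimately show "H \<subseteq> V - S - R \<and> H \<union> S \<in> C" by (simp add: Un_absorb2) blast
next
  assume H: "H \<subseteq> V - S - R \<and> H \<union> S \<in> C"
  then have "(H \<union> S) \<inter> R = {}" "H = (H \<union> S) - S" using assms(2) by blast+
  then show "H \<in> minor_faces C R S"
    using H unfolding minor_faces_def link_faces_def del_faces_def by blast
qed

lemma minor_faces_alex_dual_nonface:
  assumes "simplicial_complex V C" and "S \<subseteq> V" and "R \<subseteq> V" and "S \<inter> R = {}"
    and "S \<notin> C"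
  shows "minor_faces (alex_dual V C) S R = Pow (V - S - R)"
  using assms unfolding simplicial_complex_def
  by (auto simp: mem_minor_faces_alex_dual[OF assms(2-4)])

lemma minor_faces_alex_dual_face:
  assumes "C \<subseteq> Pow V" and "S \<subseteq> V" and "R \<subseteq> V" and "S \<inter> R = {}"
  shows "minor_faces (alex_dual V C) S R = alex_dual (V - S - R) (minor_faces C R S)"
proof (rule set_eqI)
  fix G
  show "G \<in> minor_faces (alex_dual V C) S R \<longleftrightarrow> G \<in> alex_dual (V - S - R) (minor_faces C R S)"
    using mem_minor_faces_alex_dual[OF assms(2-4), of G C]
      mem_minor_faces[OF assms(1,4), of "V - S - R - G"]
    unfolding alex_dual_def by auto
qed

theorem proposition4p3:
  fixes V :: "'a set" and C :: "'a set set"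
  assumes "simplicial_complex V C" and "beta_avoiding V C"
  shows "beta_avoiding V (alex_dual V C)"
  unfolding beta_avoiding_def
proof (intro allI impI notI, elim conjE)
  fix S R
  assume S: "S \<subseteq> V" and R: "R \<in> alex_dual V C" and SR: "S \<inter> R = {}"
    and forbidden: "is_forbidden (V - S - R) (minor_faces (alex_dual V C) S R)"
  have RV: "R \<subseteq> V" using R unfolding alex_dual_def by blast
  have C: "C \<subseteq> Pow V" using assms(1) unfolding simplicial_complex_def by blast
  show False
  proof (cases "S \<in> C")
    case False
    then show False
      using forbidden not_is_forbidden_Pow minor_faces_alex_dual_nonface[OF assms(1) S RV SR]
      by metis
  next
    case True
    have "minor_faces C R S \<subseteq> Pow (V - S - R)" by (auto simp: mem_minor_faces[OF C SR])
    then have "is_forbidden (V - S - R) (minor_faces C R S)"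
      using is_forbidden_alex_dualD forbidden
      by (simp add: minor_faces_alex_dual_face[OF C S RV SR])
    moreover have "\<not> is_forbidden (V - R - S) (minor_faces C R S)"
      using assms(2) RV True SR unfolding beta_avoiding_def by blast
    moreover have "V - R - S = V - S - R" by blast
    ultimately show False by simp
  qed
qed

end
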